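(* Let $G$ be a two-player game with a finite set $\mathcal{P}$ of positions as in the context, let $x$ be a Richman function for $G$, and let $T$ be the set defined from $x$ as in the context. If every position that is quiescent with respect to $x$ belongs to $T$, then every position belongs to $T$.
   Context: The game is given by a finite set $\mathcal{P}$ of positions; each non-terminal position $P$ has a nonempty set of White options $P_w$ and a nonempty set of Black options $P_b$. Terminal positions are designated as White wins or Black wins. A Richman function is a function $x:\mathcal{P}\to[0,1]$ with $x(P)=1$ at terminal White wins, $x(P)=0$ at terminal Black wins, and $x(P)=\frac12(\max_w x(P_w)+\min_b x(P_b))$ at every non-terminal $P$. A White move from $P$ to $P_w$ is $x$-greedy if $x(P_w)=\max_{w'}x(P_{w'})$. Let $T_0$ be the set of terminal positions, and for $n\ge0$ let $T_{n+1}$ consist of the positions that belong to $T_n$, or have an $x$-greedy White option in $T_n$, or have all of their Black options in $T_n$; let $T=\bigcup_n T_n$. A non-terminal position $P$ is quiescent with respect to $x$ if $\min_b x(P_b)=\max_w x(P_w)$. *)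

theory Defs
  imports Main "HOL-Library.FuncSet" Complex_Main
begin

text \<open>A finite game: positions \<open>Pos\<close>, a set \<open>Term\<close> of terminal positions, the set \<open>WWin\<close>
 of terminal White wins (terminal positions not in \<open>WWin\<close> are Black wins),
 and White/Black option maps \<open>Wo\<close>, \<open>Bo\<close>.\<close>

definition game :: "'p set \<Rightarrow> 'p set \<Rightarrow> 'p set \<Rightarrow> ('p \<Rightarrow> 'p set) \<Rightarrow> ('p \<Rightarrow> 'p set) \<Rightarrow> bool" where
  "game Pos Term WWin Wo Bo \<longleftrightarrow> finite Pos \<and> Term \<subseteq> Pos \<and> WWin \<subseteq> Term \<and>
     (\<forall>P\<in>Pos - Term. Wo P \<noteq> {} \<and> Wo P \<subseteq> Pos \<and> Bo P \<noteq> {} \<and> Bo P \<subseteq> Pos)"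

definition richman :: "'p set \<Rightarrow> 'p set \<Rightarrow> 'p set \<Rightarrow> ('p \<Rightarrow> 'p set) \<Rightarrow> ('p \<Rightarrow> 'p set) \<Rightarrow> ('p \<Rightarrow> real) \<Rightarrow> bool" where
  "richman Pos Term WWin Wo Bo x \<longleftrightarrow>
     (\<forall>P\<in>Pos. 0 \<le> x P \<and> x P \<le> 1) \<and>
     (\<forall>P\<in>WWin. x P = 1) \<and>
     (\<forall>P\<in>Term - WWin. x P = 0) \<and>
     (\<forall>P\<in>Pos - Term. x P = (Max (x ` Wo P) + Min (x ` Bo P)) / 2)"

definition greedy :: "('p \<Rightarrow> 'p set) \<Rightarrow> ('p \<Rightarrow> real) \<Rightarrow> 'p \<Rightarrow> 'p \<Rightarrow> bool" where
  "greedy Wo x P Q \<longleftrightarrow> Q \<in> Wo P \<and> x Q = Max (x ` Wo P)"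

fun Tn :: "'p set \<Rightarrow> 'p set \<Rightarrow> ('p \<Rightarrow> 'p set) \<Rightarrow> ('p \<Rightarrow> 'p set) \<Rightarrow> ('p \<Rightarrow> real) \<Rightarrow> nat \<Rightarrow> 'p set" where
  "Tn Pos Term Wo Bo x 0 = Term"
| "Tn Pos Term Wo Bo x (Suc n) =
     {P \<in> Pos. P \<in> Tn Pos Term Wo Bo x n
        \<or> (\<exists>Q. greedy Wo x P Q \<and> Q \<in> Tn Pos Term Wo Bo x n)
        \<or> Bo P \<subseteq> Tn Pos Term Wo Bo x n}"

definition Tset :: "'p set \<Rightarrow> 'p set \<Rightarrow> ('p \<Rightarrow> 'p set) \<Rightarrow> ('p \<Rightarrow> 'p set) \<Rightarrow> ('p \<Rightarrow> real) \<Rightarrow> 'p set" where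
  "Tset Pos Term Wo Bo x = (\<Union>n. Tn Pos Term Wo Bo x n)"

definition quiescent :: "'p set \<Rightarrow> ('p \<Rightarrow> 'p set) \<Rightarrow> ('p \<Rightarrow> 'p set) \<Rightarrow> ('p \<Rightarrow> real) \<Rightarrow> 'p \<Rightarrow> bool" where
  "quiescent Term Wo Bo x P \<longleftrightarrow> P \<notin> Term \<and> Min (x ` Bo P) = Max (x ` Wo P)"

end

theory Submission
  imports Defs
begin

text \<open>Suppose some position lies outside \<open>T\<close> and pick one, \<open>P\<close>, of largest value \<open>x P\<close> among
  them. It is not terminal, since terminal positions lie in \<open>T\<close>, and by hypothesis it is not
  quiescent. If White's best option is worth more than Black's best option, then \<open>x P\<close> lies strictly
  below the greedy White value, and the greedy option is outside \<open>T\<close> (else \<open>P\<close> would be in \<open>T\<close>).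
  Otherwise \<open>x P\<close> lies strictly below every Black value, and some Black option is outside \<open>T\<close>
  (else \<open>P\<close> would be in \<open>T\<close>). Either way a position outside \<open>T\<close> beats \<open>P\<close>, a contradiction.\<close>

lemma Tn_subset_Suc:
  assumes "Term \<subseteq> Pos"
  shows "Tn Pos Term Wo Bo x n \<subseteq> Tn Pos Term Wo Bo x (Suc n)"
  using assms by (cases n) auto

lemma Tn_mono:
  assumes "Term \<subseteq> Pos" and "m \<le> n"
  shows "Tn Pos Term Wo Bo x m \<subseteq> Tn Pos Term Wo Bo x n"
  using lift_Suc_mono_le[of "Tn Pos Term Wo Bo x", OF Tn_subset_Suc[OF assms(1)] assms(2)] .

lemma Term_subset_Tset: "Term \<subseteq> Tset Pos Term Wo Bo x"
  unfolding Tset_def by (metis Tn.simps(1) UN_upper UNIV_I)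

lemma finite_subset_Tset_imp_subset_Tn:
  assumes "Term \<subseteq> Pos" and "finite B" and "B \<subseteq> Tset Pos Term Wo Bo x"
  shows "\<exists>n. B \<subseteq> Tn Pos Term Wo Bo x n"
  using assms(2,3)
proof (induction B rule: finite_induct)
  case empty
  then show ?case by simp
next
  case (insert Q B)
  obtain m where "B \<subseteq> Tn Pos Term Wo Bo x m" using insert by auto
  moreover obtain k where "Q \<in> Tn Pos Term Wo Bo x k" using insert.prems unfolding Tset_def by auto
  ultimately have "insert Q B \<subseteq> Tn Pos Term Wo Bo x (max m k)"
    using Tn_mono[OF assms(1), of m "max m k" Wo Bo x] Tn_mono[OF assms(1), of k "max m k" Wo Bo x]
    by auto
  then show ?case by blast
qed

lemma Tset_greedy_closed:
  assumes "P \<in> Pos" and "greedy Wo x P Q" and "Q \<in> Tset Pos Term Wo Bo x"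
  shows "P \<in> Tset Pos Term Wo Bo x"
proof -
  obtain n where "Q \<in> Tn Pos Term Wo Bo x n" using assms(3) unfolding Tset_def by auto
  then have "P \<in> Tn Pos Term Wo Bo x (Suc n)" using assms(1,2) by auto
  then show ?thesis unfolding Tset_def by blast
qed

lemma Tset_Black_closed:
  assumes "Term \<subseteq> Pos" and "P \<in> Pos" and "finite (Bo P)" and "Bo P \<subseteq> Tset Pos Term Wo Bo x"
  shows "P \<in> Tset Pos Term Wo Bo x"
proof -
  obtain n where "Bo P \<subseteq> Tn Pos Term Wo Bo x n"
    using finite_subset_Tset_imp_subset_Tn[OF assms(1,3,4)] by blast
  then have "P \<in> Tn Pos Term Wo Bo x (Suc n)" using assms(2) by auto
  then show ?thesis unfolding Tset_def by blast
qed

lemma non_quiescent_outside_Tset_has_larger_outside: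
  assumes game: "game Pos Term WWin Wo Bo" and rich: "richman Pos Term WWin Wo Bo x"
    and P: "P \<in> Pos" "P \<notin> Tset Pos Term Wo Bo x" and not_quiescent: "\<not> quiescent Term Wo Bo x P"
  shows "\<exists>Q \<in> Pos - Tset Pos Term Wo Bo x. x P < x Q"
proof -
  let ?T = "Tset Pos Term Wo Bo x"
  have "P \<notin> Term" using P(2) Term_subset_Tset[of Term Pos Wo Bo x] by blast
  then have opts: "Wo P \<noteq> {}" "Wo P \<subseteq> Pos" "Bo P \<noteq> {}" "Bo P \<subseteq> Pos"
    and "finite Pos" and TP: "Term \<subseteq> Pos"
    using game P(1) unfolding game_def by auto
  then have fin: "finite (Wo P)" "finite (Bo P)"
    using finite_subset[OF opts(2)] finite_subset[OF opts(4)] by auto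
  have xP: "x P = (Max (x ` Wo P) + Min (x ` Bo P)) / 2"
    using rich P(1) \<open>P \<notin> Term\<close> unfolding richman_def by simp
  have "Min (x ` Bo P) \<noteq> Max (x ` Wo P)"
    using not_quiescent \<open>P \<notin> Term\<close> unfolding quiescent_def by simp
  then consider "Min (x ` Bo P) < Max (x ` Wo P)" | "Max (x ` Wo P) < Min (x ` Bo P)"
    by linarith
  then show ?thesis
  proof cases
    case 1
    have "Max (x ` Wo P) \<in> x ` Wo P" using fin(1) opts(1) by simp
    then obtain Q where Q: "Q \<in> Wo P" "x Q = Max (x ` Wo P)" by (metis imageE)
    then have "greedy Wo x P Q" unfolding greedy_def by blast
    then have "Q \<notin> ?T" using Tset_greedy_closed[OF P(1)] P(2) by blast
    moreover have "x P < x Q" using Q(2) 1 xP by simp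
    ultimately show ?thesis using Q(1) opts(2) by blast
  next
    case 2
    obtain Q where Q: "Q \<in> Bo P" "Q \<notin> ?T"
      using Tset_Black_closed[where Bo = Bo and Wo = Wo and x = x, OF TP P(1) fin(2)] P(2) by blast
    have "x P < Min (x ` Bo P)" using 2 xP by simp
    also have "Min (x ` Bo P) \<le> x Q" using Q(1) fin(2) by simp
    finally have "x P < x Q" .
    then show ?thesis using Q opts(4) by blast
  qed
qed

theorem proposition3:
  fixes Pos Term WWin :: "'p set" and Wo Bo :: "'p \<Rightarrow> 'p set" and x :: "'p \<Rightarrow> real"
  assumes "game Pos Term WWin Wo Bo"
    and "richman Pos Term WWin Wo Bo x"
    and "\<forall>P\<in>Pos. quiescent Term Wo Bo x P \<longrightarrow> P \<in> Tset Pos Term Wo Bo x"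
  shows "Pos \<subseteq> Tset Pos Term Wo Bo x"
proof (rule ccontr)
  let ?S = "Pos - Tset Pos Term Wo Bo x"
  assume "\<not> Pos \<subseteq> Tset Pos Term Wo Bo x"
  moreover have "finite ?S" using assms(1) unfolding game_def by blast
  ultimately obtain P where P: "P \<in> ?S" and P_max: "\<forall>Q \<in> ?S. x Q \<le> x P"
    using ex_is_arg_min_if_finite[of ?S "\<lambda>Q. - x Q"] unfolding is_arg_min_linorder by auto
  have "\<not> quiescent Term Wo Bo x P" using assms(3) P by blast
  then obtain Q where "Q \<in> ?S" "x P < x Q"
    using non_quiescent_outside_Tset_has_larger_outside[OF assms(1,2)] P by blast
  with P_max show False by (meson not_le)
qed

end
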